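(* Assume (H1), $\lim_{x\to\infty}q(x)=\infty$, and $$\lim_{z\to\infty}\frac{q'(z)}{q(z)}\sqrt{M(z)}=0.$$ Then (i) $\lim_{z\to\infty}q(z)\sqrt{M(z)}=\infty$; (ii) (H2) holds; (iii) $\lim_{z\to\infty}\mathfrak m'(z)/\sqrt{\mathfrak m(z)}=0$.
   Context: Let $q\in C^1([0,\infty))$ and $\gamma(y)=2\int_0^yq$. (H1): $\int_0^\infty e^{\gamma(y)}\int_y^\infty e^{-\gamma(\xi)}d\xi\,dy<\infty$. (H2): $\lim_{x\to\infty}q(x)=\infty$ and $\lim_{x\to\infty}q'(x)/q(x)^2=0$. $M(z)=\int_z^\infty dy/q(y)$ (assumed finite for large $z$ as part of the hypothesis). $\mathfrak m(z)=2\int_z^\infty e^{\gamma(y)}\int_y^\infty e^{-\gamma(\xi)}d\xi\,dy$. *)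

theory Defs
  imports "HOL-Analysis.Analysis"
begin

definition gam :: "(real \<Rightarrow> real) \<Rightarrow> real \<Rightarrow> real" where
  "gam q y = 2 * integral {0..y} q"

definition inner_int :: "(real \<Rightarrow> real) \<Rightarrow> real \<Rightarrow> ennreal" where
  "inner_int q y = (\<integral>\<^sup>+ \<xi>\<in>{y..}. ennreal (exp (- gam q \<xi>)) \<partial>lborel)"

definition dbl_int :: "(real \<Rightarrow> real) \<Rightarrow> real \<Rightarrow> ennreal" where
  "dbl_int q z = (\<integral>\<^sup>+ y\<in>{z..}. ennreal (exp (gam q y)) * inner_int q y \<partial>lborel)"

definition H1 :: "(real \<Rightarrow> real) \<Rightarrow> bool" where
  "H1 q \<longleftrightarrow> dbl_int q 0 < \<infinity>"

definition frak_m :: "(real \<Rightarrow> real) \<Rightarrow> real \<Rightarrow> real" where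
  "frak_m q z = 2 * enn2real (dbl_int q z)"

definition M_fun :: "(real \<Rightarrow> real) \<Rightarrow> real \<Rightarrow> real" where
  "M_fun q z = (LBINT y:{z..}. 1 / q y)"

end

theory Submission
  imports Defs
begin

text \<open>
  Write \<open>F = q \<surd>M\<close> and \<open>\<epsilon> = q' \<surd>M / q\<close>. Since \<open>M' = -1/q\<close>, one gets
  \<open>F' = (\<epsilon> F - 1/2) / \<surd>M\<close>: as long as \<open>F\<close> stays below a level \<open>K\<close> and \<open>\<epsilon>\<close> is small,
  \<open>F\<close> decreases at a rate bounded away from zero, which a positive function cannot do forever.
  Hence \<open>F \<rightarrow> \<infinity>\<close>, and \<open>q'/q\<^sup>2 = \<epsilon>/F \<rightarrow> 0\<close>.
  For the last claim put \<open>E = e\<^sup>-\<^sup>\<gamma>\<close>. Once \<open>|q'/q\<^sup>2| \<le> 1\<close>, the function \<open>E/q\<close> has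
  \<open>-(E/q)' = E (2 + q'/q\<^sup>2) \<in> [E, 3E]\<close>, so \<open>\<integral>\<^sub>y\<^sup>\<infinity> E\<close> lies between \<open>E(y)/(3q(y))\<close>
  and \<open>E(y)/q(y)\<close>. Thus the integrand \<open>h\<close> of \<open>\<frak>m\<close> satisfies \<open>1/(3q) \<le> h \<le> 1/q\<close>, whence
  \<open>\<frak>m \<ge> 2M/3\<close>, \<open>|\<frak>m'| = 2h \<le> 2/q\<close> and \<open>|\<frak>m'|/\<surd>\<frak>m \<le> 4/F \<rightarrow> 0\<close>.
\<close>

lemma integrable_on_Ici_if_bounded:
  fixes f :: "real \<Rightarrow> real"
  assumes cont: "continuous_on {a..} f" and nonneg: "\<And>x. a \<le> x \<Longrightarrow> 0 \<le> f x"
    and bound: "\<And>T. a \<le> T \<Longrightarrow> integral {a..T} f \<le> B"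
  shows "f integrable_on {a..}" "integral {a..} f \<le> B"
proof -
  have int: "f integrable_on {a..T}" for T
    by (rule integrable_continuous_interval) (rule continuous_on_subset[OF cont], auto)
  define L where "L = (SUP T\<in>{a..}. integral {a..T} f)"
  have bdd: "bdd_above ((\<lambda>T. integral {a..T} f) ` {a..})"
    using bound by (auto intro!: bdd_aboveI2)
  have "((\<lambda>T. integral {a..T} f) \<longlongrightarrow> L) at_top"
  proof (rule increasing_tendsto)
    show "eventually (\<lambda>T. integral {a..T} f \<le> L) at_top"
      using eventually_ge_at_top[of a]
      by eventually_elim (auto simp: L_def intro: cSUP_upper[OF _ bdd])
  next
    fix l assume "l < L"
    then obtain T where T: "a \<le> T" "l < integral {a..T} f"
      unfolding L_def using less_cSUP_iff[OF _ bdd] by auto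
    show "eventually (\<lambda>T'. l < integral {a..T'} f) at_top"
      using eventually_ge_at_top[of T]
    proof eventually_elim
      case (elim T')
      have "integral {a..T} f \<le> integral {a..T'} f"
        using elim by (intro integral_subset_le int) (auto intro: nonneg)
      then show ?case using T by linarith
    qed
  qed
  then have "(f has_integral L) {a..}"
    by (rule has_integral_to_inf[OF int _ nonneg])
  moreover have "L \<le> B"
    unfolding L_def by (rule cSUP_least) (auto intro: bound)
  ultimately show "f integrable_on {a..}" "integral {a..} f \<le> B"
    by (auto simp: integral_unique)
qed

lemma integral_Ici_split:
  fixes f :: "real \<Rightarrow> real"
  assumes cont: "continuous_on {a..} f" and nonneg: "\<And>x. a \<le> x \<Longrightarrow> 0 \<le> f x"
    and int: "f integrable_on {a..}" and "a \<le> z"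
  shows "integral {a..} f = integral {a..z} f + integral {z..} f"
proof -
  have int_Icc: "f integrable_on {c..d}" if "a \<le> c" for c d
    by (rule integrable_continuous_interval) (rule continuous_on_subset[OF cont], use that in auto)
  have int_z: "f integrable_on {z..}"
  proof (rule integrable_on_Ici_if_bounded(1)[where B = "integral {a..} f"])
    show "continuous_on {z..} f" by (rule continuous_on_subset[OF cont]) (use \<open>a \<le> z\<close> in auto)
    show "0 \<le> f x" if "z \<le> x" for x using that \<open>a \<le> z\<close> by (intro nonneg) auto
    show "integral {z..T} f \<le> integral {a..} f" for T
    proof (rule integral_subset_le[OF _ _ int])
      show "{z..T} \<subseteq> {a..}" using \<open>a \<le> z\<close> by auto
      show "f integrable_on {z..T}" using \<open>a \<le> z\<close> by (rule int_Icc)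
      show "\<forall>x\<in>{a..}. 0 \<le> f x" using nonneg by auto
    qed
  qed
  have "(f has_integral (integral {a..z} f + integral {z..} f)) ({a..z} \<union> {z..})"
  proof (rule has_integral_Un)
    show "(f has_integral integral {a..z} f) {a..z}"
      by (rule integrable_integral[OF int_Icc[OF order_refl]])
    show "(f has_integral integral {z..} f) {z..}"
      by (rule integrable_integral[OF int_z])
    show "negligible ({a..z} \<inter> {z..})"
      by (rule negligible_subset[of "{z}"]) auto
  qed
  moreover have "{a..z} \<union> {z..} = {a..}" using \<open>a \<le> z\<close> by auto
  ultimately show ?thesis
    by (simp add: integral_unique)
qed

lemma has_real_derivative_integral_Ici:
  fixes f :: "real \<Rightarrow> real"
  assumes cont: "continuous_on {a..} f" and nonneg: "\<And>x. a \<le> x \<Longrightarrow> 0 \<le> f x"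
    and int: "f integrable_on {a..}" and "a < z"
  shows "((\<lambda>y. integral {y..} f) has_real_derivative - f z) (at z)"
proof -
  have "((\<lambda>y. integral {a..y} f) has_real_derivative f z) (at z within {a..z+1})"
    by (rule integral_has_real_derivative) (rule continuous_on_subset[OF cont], use \<open>a < z\<close> in auto)
  then have "((\<lambda>y. integral {a..y} f) has_real_derivative f z) (at z)"
    using \<open>a < z\<close> by (simp add: at_within_Icc_at)
  from DERIV_diff[OF DERIV_const this]
  have deriv: "((\<lambda>y. integral {a..} f - integral {a..y} f) has_real_derivative - f z) (at z)"
    by simp
  show ?thesis
  proof (rule has_field_derivative_transform_within_open[OF deriv])
    show "integral {a..} f - integral {a..y} f = integral {y..} f" if "y \<in> {a<..}" for y
      using integral_Ici_split[OF cont nonneg int, of y] that by simp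
  qed (use \<open>a < z\<close> in auto)
qed

lemma integral_Ici_bounds_by_antiderivative:
  fixes g G R :: "real \<Rightarrow> real"
  assumes cont: "continuous_on {a..} g" and g_nonneg: "\<And>x. a \<le> x \<Longrightarrow> 0 \<le> g x"
    and deriv: "\<And>x. a \<le> x \<Longrightarrow> (R has_real_derivative - G x) (at x)"
    and G_bounds: "\<And>x. a \<le> x \<Longrightarrow> g x \<le> G x \<and> G x \<le> C * g x" and "0 \<le> C"
    and R_nonneg: "\<And>x. a \<le> x \<Longrightarrow> 0 \<le> R x" and R_lim: "(R \<longlongrightarrow> 0) at_top"
  shows "g integrable_on {a..}" "integral {a..} g \<le> R a" "R a \<le> C * integral {a..} g"
proof -
  have int_g: "g integrable_on {a..T}" for T
    by (rule integrable_continuous_interval) (rule continuous_on_subset[OF cont], auto)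
  have ftc: "(G has_integral R a - R T) {a..T}" if "a \<le> T" for T
  proof -
    have "(G has_integral (- R T) - (- R a)) {a..T}"
    proof (rule fundamental_theorem_of_calculus[OF that])
      fix x assume "x \<in> {a..T}"
      then have "((\<lambda>y. - R y) has_real_derivative G x) (at x)"
        using deriv[of x] DERIV_minus by fastforce
      then show "((\<lambda>y. - R y) has_vector_derivative G x) (at x within {a..T})"
        by (simp add: has_real_derivative_iff_has_vector_derivative[symmetric]
            has_field_derivative_at_within)
    qed
    then show ?thesis by simp
  qed
  have upper: "integral {a..T} g \<le> R a - R T" if "a \<le> T" for T
    by (rule has_integral_le[OF integrable_integral[OF int_g] ftc[OF that]])
       (use G_bounds that in auto)
  have lower: "R a - R T \<le> C * integral {a..T} g" if "a \<le> T" for T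
    by (rule has_integral_le[OF ftc[OF that] has_integral_mult_right[OF integrable_integral[OF int_g]]])
       (use G_bounds that in auto)
  have bound: "integral {a..T} g \<le> R a" if "a \<le> T" for T
    using upper[OF that] R_nonneg[OF that] by linarith
  show int: "g integrable_on {a..}" and "integral {a..} g \<le> R a"
    using integrable_on_Ici_if_bounded[OF cont g_nonneg bound] by auto
  have "eventually (\<lambda>T. R a - R T \<le> C * integral {a..} g) at_top"
    using eventually_ge_at_top[of a]
  proof eventually_elim
    case (elim T)
    have "integral {a..T} g \<le> integral {a..} g"
      using elim by (intro integral_subset_le int_g int) (auto intro: g_nonneg)
    then show ?case using lower[OF elim] \<open>0 \<le> C\<close> by (meson mult_left_mono order_trans)
  qed
  moreover have "((\<lambda>T. R a - R T) \<longlongrightarrow> R a - 0) at_top"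
    by (intro tendsto_intros R_lim)
  ultimately show "R a \<le> C * integral {a..} g"
    using tendsto_upperbound[of "\<lambda>T. R a - R T"] by force
qed

lemma DERIV_neg_below_level_imp_le:
  fixes F DF :: "real \<Rightarrow> real"
  assumes deriv: "\<And>x. z \<le> x \<Longrightarrow> (F has_real_derivative DF x) (at x)"
    and neg: "\<And>x. z \<le> x \<Longrightarrow> F x \<le> K \<Longrightarrow> DF x < 0"
    and "F z \<le> K" and "z \<le> t"
  shows "F t \<le> K"
proof -
  define A where "A = {z..t} \<inter> F -` {..K}"
  have "continuous_on {z..t} F"
    by (rule DERIV_continuous_on) (use deriv in \<open>auto intro: has_field_derivative_at_within\<close>)
  then have "closed A" unfolding A_def by (rule continuous_closed_preimage) auto
  moreover have "bdd_above A" unfolding A_def by (rule bdd_aboveI[of _ t]) auto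
  moreover have "z \<in> A" using assms by (auto simp: A_def)
  ultimately have "Sup A \<in> A" by (intro closed_contains_Sup) auto
  define s where "s = Sup A"
  note s = \<open>Sup A \<in> A\<close>[folded s_def]
  have "s = t"
  proof (rule ccontr)
    assume "s \<noteq> t"
    with s have "s < t" "z \<le> s" "F s \<le> K" by (auto simp: A_def)
    obtain d where "d > 0" and d: "\<And>h. 0 < h \<Longrightarrow> h < d \<Longrightarrow> F (s + h) < F s"
      using DERIV_neg_dec_right[OF deriv neg] \<open>z \<le> s\<close> \<open>F s \<le> K\<close> by blast
    define h where "h = min (d / 2) (t - s)"
    have "0 < h" "h < d" using \<open>d > 0\<close> \<open>s < t\<close> by (auto simp: h_def)
    then have "s + h \<in> A"
      using d[of h] \<open>F s \<le> K\<close> \<open>z \<le> s\<close> by (auto simp: A_def h_def)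
    then have "s + h \<le> s" unfolding s_def by (rule cSup_upper[OF _ \<open>bdd_above A\<close>])
    then show False using \<open>0 < h\<close> by simp
  qed
  then show ?thesis using s by (simp add: A_def)
qed

lemma filterlim_at_top_if_DERIV_le_neg_below_level:
  fixes F DF :: "real \<Rightarrow> real"
  assumes deriv: "\<And>x. a \<le> x \<Longrightarrow> (F has_real_derivative DF x) (at x)"
    and nonneg: "\<And>x. a \<le> x \<Longrightarrow> 0 \<le> F x" and "0 < c"
    and slope: "\<And>K. eventually (\<lambda>x. F x \<le> K \<longrightarrow> DF x \<le> - c) at_top"
  shows "filterlim F at_top at_top"
  unfolding filterlim_at_top
proof
  fix K
  obtain Z where Z: "\<And>x. Z \<le> x \<Longrightarrow> F x \<le> K \<longrightarrow> DF x \<le> - c"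
    using slope[of K] by (auto simp: eventually_at_top_linorder)
  have above: "K < F z" if "max a Z \<le> z" for z
  proof (rule ccontr)
    assume "\<not> K < F z"
    then have below: "F t \<le> K" if "z \<le> t" for t
    proof (intro DERIV_neg_below_level_imp_le[of z F DF K t] that)
      show "(F has_real_derivative DF x) (at x)" if "z \<le> x" for x
        using that \<open>max a Z \<le> z\<close> by (intro deriv) auto
      show "DF x < 0" if "z \<le> x" "F x \<le> K" for x
        using that Z[of x] \<open>max a Z \<le> z\<close> \<open>0 < c\<close> by auto
    qed auto
    define t where "t = z + (\<bar>K\<bar> + 1) / c"
    have "z \<le> t" using \<open>0 < c\<close> by (simp add: t_def)
    have "F t + c * t \<le> F z + c * z"
    proof (rule deriv_nonpos_imp_antimono[where g = "\<lambda>x. F x + c * x" and g' = "\<lambda>x. DF x + c"])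
      show "((\<lambda>x. F x + c * x) has_real_derivative DF x + c) (at x)" if "x \<in> {z..t}" for x
        using that \<open>max a Z \<le> z\<close> by (auto intro!: derivative_eq_intros deriv)
      show "DF x + c \<le> 0" if "x \<in> {z..t}" for x
        using that Z[of x] below[of x] \<open>max a Z \<le> z\<close> by auto
    qed fact
    moreover have "c * t = c * z + \<bar>K\<bar> + 1" using \<open>0 < c\<close> by (simp add: t_def field_simps)
    ultimately have "F t < 0" using \<open>\<not> K < F z\<close> by linarith
    then show False using nonneg[of t] \<open>z \<le> t\<close> \<open>max a Z \<le> z\<close> by linarith
  qed
  show "eventually (\<lambda>z. K \<le> F z) at_top"
    using eventually_ge_at_top[of "max a Z"] by eventually_elim (use above in force)
qed

locale integrable_reciprocal =
  fixes q q' :: "real \<Rightarrow> real" and a :: real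
  assumes a_pos: "0 < a"
    and deriv_q: "\<And>x. 0 \<le> x \<Longrightarrow> (q has_real_derivative q' x) (at x within {0..})"
    and q_ge_1: "\<And>x. a \<le> x \<Longrightarrow> 1 \<le> q x"
    and integrable_inverse_q: "\<And>z. a \<le> z \<Longrightarrow> set_integrable lborel {z..} (\<lambda>y. 1 / q y)"
begin

lemma q_pos: "a \<le> x \<Longrightarrow> 0 < q x"
  using q_ge_1[of x] by simp

lemma inverse_q_nonneg: "a \<le> x \<Longrightarrow> 0 \<le> 1 / q x"
  using q_pos[of x] by simp

lemma continuous_on_q: "continuous_on {0..} q"
  by (rule DERIV_continuous_on) (use deriv_q in auto)

lemma DERIV_q:
  assumes "0 < x"
  shows "(q has_real_derivative q' x) (at x)"
proof -
  have "(q has_real_derivative q' x) (at x within {0<..})"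
    by (rule DERIV_subset[OF deriv_q]) (use assms in auto)
  moreover have "at x within {0<..} = at x"
    by (rule at_within_open) (use assms in auto)
  ultimately show ?thesis by simp
qed

lemma continuous_on_inverse_q: "continuous_on {a..} (\<lambda>y. 1 / q y)"
  using a_pos q_pos
  by (intro continuous_on_divide continuous_on_const continuous_on_subset[OF continuous_on_q]) force+

lemma M_has_integral: "a \<le> z \<Longrightarrow> ((\<lambda>y. 1 / q y) has_integral M_fun q z) {z..}"
  using set_borel_integral_eq_integral[OF integrable_inverse_q]
  unfolding M_fun_def by (simp add: integrable_integral)

lemma M_nonneg: "a \<le> z \<Longrightarrow> 0 \<le> M_fun q z"
  by (rule has_integral_nonneg[OF M_has_integral]) (auto intro!: less_imp_le[OF q_pos])

lemma M_antimono:
  assumes "a \<le> y" "y \<le> z"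
  shows "M_fun q z \<le> M_fun q y"
proof -
  have "integral {z..} (\<lambda>y. 1 / q y) \<le> integral {y..} (\<lambda>y. 1 / q y)"
    using assms M_has_integral[of y] M_has_integral[of z]
    by (intro integral_subset_le) (auto intro!: less_imp_le[OF q_pos])
  then show ?thesis
    using assms by (simp add: integral_unique[OF M_has_integral])
qed

lemma DERIV_M: "a < z \<Longrightarrow> (M_fun q has_real_derivative - (1 / q z)) (at z)"
  using has_real_derivative_integral_Ici[OF continuous_on_inverse_q inverse_q_nonneg
      has_integral_integrable[OF M_has_integral[OF order_refl]]]
  by (rule has_field_derivative_transform_within_open[where S = "{a<..}"])
     (auto simp: integral_unique[OF M_has_integral])

lemma M_pos: "a \<le> z \<Longrightarrow> 0 < M_fun q z"
proof -
  assume "a \<le> z"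
  have "M_fun q (z + 2) < M_fun q (z + 1)"
  proof (rule DERIV_neg_imp_decreasing[where f = "M_fun q"])
    show "z + 1 < z + 2" by simp
  next
    fix x assume "z + 1 \<le> x" "x \<le> z + 2"
    with \<open>a \<le> z\<close> show "\<exists>y. (M_fun q has_real_derivative y) (at x) \<and> y < 0"
      using DERIV_M[of x] q_pos[of x] by auto
  qed
  then show ?thesis
    using M_antimono[of z "z + 1"] M_nonneg[of "z + 2"] \<open>a \<le> z\<close> by linarith
qed

lemma DERIV_q_sqrt_M:
  assumes "a < z"
  shows "((\<lambda>z. q z * sqrt (M_fun q z)) has_real_derivative
           q' z * sqrt (M_fun q z) - 1 / (2 * sqrt (M_fun q z))) (at z)"
proof -
  have "0 < M_fun q z" "0 < q z" using assms M_pos q_pos by auto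
  have "((\<lambda>z. q z * sqrt (M_fun q z)) has_real_derivative
      q' z * sqrt (M_fun q z) + q z * (inverse (sqrt (M_fun q z)) / 2 * - (1 / q z))) (at z)"
    using DERIV_q[of z] DERIV_M[OF assms] \<open>0 < M_fun q z\<close> a_pos assms
    by (auto intro!: derivative_eq_intros DERIV_real_sqrt)
  moreover have "q' z * sqrt (M_fun q z) + q z * (inverse (sqrt (M_fun q z)) / 2 * - (1 / q z))
      = q' z * sqrt (M_fun q z) - 1 / (2 * sqrt (M_fun q z))"
    using \<open>0 < q z\<close> by (simp add: field_simps)
  ultimately show ?thesis by simp
qed

lemma deriv_q_sqrt_M_le_neg:
  assumes "a \<le> x" "0 < K" "q x * sqrt (M_fun q x) \<le> K"
    and small: "\<bar>q' x / q x * sqrt (M_fun q x)\<bar> \<le> 1 / (4 * K)"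
  shows "q' x * sqrt (M_fun q x) - 1 / (2 * sqrt (M_fun q x)) \<le> - (1 / (4 * sqrt (M_fun q a)))"
proof -
  define s where "s = sqrt (M_fun q x)"
  define \<epsilon> where "\<epsilon> = q' x / q x * s"
  have "0 < s" "s \<le> sqrt (M_fun q a)"
    using M_pos[of x] M_antimono[of a x] assms(1) by (auto simp: s_def)
  have "0 < q x" using q_pos assms(1) by simp
  have "\<epsilon> * (q x * s) \<le> \<bar>\<epsilon>\<bar> * (q x * s)"
    using \<open>0 < s\<close> \<open>0 < q x\<close> by (intro mult_right_mono) auto
  also have "\<dots> \<le> \<bar>\<epsilon>\<bar> * K"
    using assms(3) by (intro mult_left_mono) (auto simp: s_def)
  also have "\<dots> \<le> 1 / (4 * K) * K"
    using small \<open>0 < K\<close> by (intro mult_right_mono) (auto simp: \<epsilon>_def s_def)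
  also have "\<dots> = 1 / 4" using \<open>0 < K\<close> by simp
  finally have "\<epsilon> * (q x * s) - 1 / 2 \<le> - (1 / 4)" by simp
  then have "(\<epsilon> * (q x * s) - 1 / 2) / s \<le> - (1 / 4) / s"
    using \<open>0 < s\<close> by (intro divide_right_mono) auto
  moreover have "(\<epsilon> * (q x * s) - 1 / 2) / s = q' x * s - 1 / (2 * s)"
    using \<open>0 < s\<close> \<open>0 < q x\<close> by (simp add: \<epsilon>_def field_simps)
  moreover have "- (1 / 4) / s \<le> - (1 / (4 * sqrt (M_fun q a)))"
    using \<open>0 < s\<close> \<open>s \<le> sqrt (M_fun q a)\<close> by (simp add: frac_le)
  ultimately show ?thesis by (simp add: s_def)
qed

lemma q_sqrt_M_at_top:
  assumes eps: "((\<lambda>z. q' z / q z * sqrt (M_fun q z)) \<longlongrightarrow> 0) at_top"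
  shows "filterlim (\<lambda>z. q z * sqrt (M_fun q z)) at_top at_top"
proof (rule filterlim_at_top_if_DERIV_le_neg_below_level[OF DERIV_q_sqrt_M])
  show "0 \<le> q x * sqrt (M_fun q x)" if "a + 1 \<le> x" for x
    using that q_pos[of x] M_nonneg[of x] by simp
  show "0 < 1 / (4 * sqrt (M_fun q a))" using M_pos[of a] by simp
  fix K :: real
  have "eventually (\<lambda>z. \<bar>q' z / q z * sqrt (M_fun q z)\<bar> < 1 / (4 * max K 1)) at_top"
    using eps by (auto simp: tendsto_iff dist_real_def)
  then show "eventually (\<lambda>x. q x * sqrt (M_fun q x) \<le> K \<longrightarrow>
      q' x * sqrt (M_fun q x) - 1 / (2 * sqrt (M_fun q x)) \<le> - (1 / (4 * sqrt (M_fun q a)))) at_top"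
    using eventually_ge_at_top[of a]
  proof eventually_elim
    case (elim x)
    then show ?case
      by (intro impI deriv_q_sqrt_M_le_neg[of _ "max K 1"]) auto
  qed
qed auto

lemma q'_over_q2_tendsto_0:
  assumes eps: "((\<lambda>z. q' z / q z * sqrt (M_fun q z)) \<longlongrightarrow> 0) at_top"
  shows "((\<lambda>x. q' x / (q x)\<^sup>2) \<longlongrightarrow> 0) at_top"
proof -
  have "((\<lambda>x. q' x / q x * sqrt (M_fun q x) * inverse (q x * sqrt (M_fun q x))) \<longlongrightarrow> 0 * 0) at_top"
    by (intro tendsto_mult eps tendsto_inverse_0_at_top q_sqrt_M_at_top)
  moreover have "eventually (\<lambda>x. q' x / q x * sqrt (M_fun q x) * inverse (q x * sqrt (M_fun q x))
      = q' x / (q x)\<^sup>2) at_top"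
    using eventually_ge_at_top[of a]
  proof eventually_elim
    case (elim x)
    then have "0 < q x" "0 < sqrt (M_fun q x)" using q_pos M_pos by auto
    then show ?case by (simp add: field_simps power2_eq_square)
  qed
  ultimately show ?thesis by (simp add: tendsto_cong)
qed

lemma DERIV_gam: "0 < y \<Longrightarrow> (gam q has_real_derivative 2 * q y) (at y)"
proof -
  assume "0 < y"
  have "((\<lambda>x. integral {0..x} q) has_real_derivative q y) (at y within {0..y+1})"
    by (rule integral_has_real_derivative) (rule continuous_on_subset[OF continuous_on_q], use \<open>0 < y\<close> in auto)
  then have "((\<lambda>x. integral {0..x} q) has_real_derivative q y) (at y)"
    using \<open>0 < y\<close> by (simp add: at_within_Icc_at)
  then show ?thesis
    unfolding gam_def[abs_def] by (rule DERIV_cmult)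
qed

lemma gam_at_top: "filterlim (gam q) at_top at_top"
proof -
  have linear_bound: "2 * x - gam q x \<le> 2 * a - gam q a" if "a \<le> x" for x
  proof (rule deriv_nonpos_imp_antimono[where g = "\<lambda>x. 2 * x - gam q x" and g' = "\<lambda>x. 2 - 2 * q x"])
    fix y assume "y \<in> {a..x}"
    then show "((\<lambda>x. 2 * x - gam q x) has_real_derivative 2 - 2 * q y) (at y)"
      using a_pos by (auto intro!: derivative_eq_intros DERIV_gam)
    show "2 - 2 * q y \<le> 0" using q_ge_1[of y] \<open>y \<in> {a..x}\<close> by simp
  qed fact
  have "eventually (\<lambda>x. (gam q a - 2 * a) + 2 * x \<le> gam q x) at_top"
    using eventually_ge_at_top[of a] by eventually_elim (use linear_bound in force)
  moreover have "filterlim (\<lambda>x. (gam q a - 2 * a) + 2 * x) at_top at_top"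
    by (intro filterlim_tendsto_add_at_top[OF tendsto_const]
        filterlim_tendsto_pos_mult_at_top[OF tendsto_const _ filterlim_ident]) simp
  ultimately show ?thesis by (rule filterlim_at_top_mono[rotated])
qed

lemma continuous_on_exp_neg_gam: "continuous_on {a..} (\<lambda>\<xi>. exp (- gam q \<xi>))"
  using a_pos
  by (intro continuous_at_imp_continuous_on ballI continuous_intros DERIV_isCont[OF DERIV_gam]) auto

lemma DERIV_exp_neg_gam_over_q:
  assumes "a \<le> x"
  shows "((\<lambda>x. exp (- gam q x) / q x) has_real_derivative
           - (exp (- gam q x) * (2 + q' x / (q x)\<^sup>2))) (at x)"
proof -
  have "0 < x" "0 < q x" using assms a_pos q_pos by auto
  have "((\<lambda>x. exp (- gam q x)) has_real_derivative exp (- gam q x) * - (2 * q x)) (at x)"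
    by (intro DERIV_fun_exp DERIV_minus DERIV_gam \<open>0 < x\<close>)
  then have "((\<lambda>x. exp (- gam q x) / q x) has_real_derivative
      (exp (- gam q x) * - (2 * q x) * q x - exp (- gam q x) * q' x) / (q x * q x)) (at x)"
    using \<open>0 < x\<close> \<open>0 < q x\<close> by (intro DERIV_divide DERIV_q) auto
  moreover have "(exp (- gam q x) * - (2 * q x) * q x - exp (- gam q x) * q' x) / (q x * q x)
      = - (exp (- gam q x) * (2 + q' x / (q x)\<^sup>2))"
    using \<open>0 < q x\<close> by (simp add: field_simps power2_eq_square)
  ultimately show ?thesis by simp
qed

lemma exp_neg_gam_over_q_tendsto_0: "((\<lambda>x. exp (- gam q x) / q x) \<longlongrightarrow> 0) at_top"
proof (rule Lim_null_comparison)
  show "eventually (\<lambda>x. norm (exp (- gam q x) / q x) \<le> exp (- gam q x)) at_top"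
    using eventually_ge_at_top[of a]
  proof eventually_elim
    case (elim x)
    then have "1 \<le> q x" by (rule q_ge_1)
    then show ?case by (simp add: divide_le_eq)
  qed
  show "((\<lambda>x. exp (- gam q x)) \<longlongrightarrow> 0) at_top"
    using gam_at_top by (intro filterlim_compose[OF exp_at_bot]) (simp add: filterlim_uminus_at_top)
qed

end

text \<open>The bound \<open>|q'/q\<^sup>2| \<le> 1\<close> says that \<open>1/q\<close> is 1-Lipschitz.\<close>

locale lipschitz_reciprocal = integrable_reciprocal +
  assumes q'_over_q2_bound: "\<And>x. a \<le> x \<Longrightarrow> \<bar>q' x / (q x)\<^sup>2\<bar> \<le> 1"
begin

definition dbl_integrand :: "real \<Rightarrow> real" where
  "dbl_integrand y = exp (gam q y) * integral {y..} (\<lambda>\<xi>. exp (- gam q \<xi>))"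

lemma exp_neg_gam_tail_bounds:
  assumes "a \<le> y"
  shows "(\<lambda>\<xi>. exp (- gam q \<xi>)) integrable_on {y..}"
    and "exp (- gam q y) / q y \<le> 3 * integral {y..} (\<lambda>\<xi>. exp (- gam q \<xi>))"
    and "integral {y..} (\<lambda>\<xi>. exp (- gam q \<xi>)) \<le> exp (- gam q y) / q y"
proof -
  have G_bounds: "exp (- gam q x) \<le> exp (- gam q x) * (2 + q' x / (q x)\<^sup>2)
      \<and> exp (- gam q x) * (2 + q' x / (q x)\<^sup>2) \<le> 3 * exp (- gam q x)" if "y \<le> x" for x
  proof -
    have "- 1 \<le> q' x / (q x)\<^sup>2" "q' x / (q x)\<^sup>2 \<le> 1"
      using q'_over_q2_bound[of x] that assms by (simp_all only: abs_le_iff) linarith+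
    then show ?thesis by simp
  qed
  have deriv: "((\<lambda>x. exp (- gam q x) / q x) has_real_derivative
      - (exp (- gam q x) * (2 + q' x / (q x)\<^sup>2))) (at x)" if "y \<le> x" for x
    using that assms by (intro DERIV_exp_neg_gam_over_q) auto
  have quotient_nonneg: "0 \<le> exp (- gam q x) / q x" if "y \<le> x" for x
    using that assms q_pos[of x] by simp
  note bounds = integral_Ici_bounds_by_antiderivative[OF
      continuous_on_subset[OF continuous_on_exp_neg_gam] _ deriv G_bounds _ quotient_nonneg
      exp_neg_gam_over_q_tendsto_0]
  show "(\<lambda>\<xi>. exp (- gam q \<xi>)) integrable_on {y..}"
    and "exp (- gam q y) / q y \<le> 3 * integral {y..} (\<lambda>\<xi>. exp (- gam q \<xi>))"
    and "integral {y..} (\<lambda>\<xi>. exp (- gam q \<xi>)) \<le> exp (- gam q y) / q y"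
    by (rule bounds; use assms in auto)+
qed

lemma dbl_integrand_bounds:
  assumes "a \<le> y"
  shows "1 / (3 * q y) \<le> dbl_integrand y" "dbl_integrand y \<le> 1 / q y"
proof -
  have eq: "exp (gam q y) * (exp (- gam q y) / q y) = 1 / q y"
    by (simp add: exp_minus_inverse)
  have "exp (gam q y) * (exp (- gam q y) / q y)
      \<le> exp (gam q y) * (3 * integral {y..} (\<lambda>\<xi>. exp (- gam q \<xi>)))"
    by (rule mult_left_mono[OF exp_neg_gam_tail_bounds(2)[OF assms]]) simp
  then have "1 / q y \<le> exp (gam q y) * (3 * integral {y..} (\<lambda>\<xi>. exp (- gam q \<xi>)))"
    unfolding eq .
  then show "1 / (3 * q y) \<le> dbl_integrand y"
    using q_pos[OF assms] by (simp add: dbl_integrand_def field_simps)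
  have "exp (gam q y) * integral {y..} (\<lambda>\<xi>. exp (- gam q \<xi>))
      \<le> exp (gam q y) * (exp (- gam q y) / q y)"
    by (rule mult_left_mono[OF exp_neg_gam_tail_bounds(3)[OF assms]]) simp
  then show "dbl_integrand y \<le> 1 / q y"
    unfolding eq dbl_integrand_def .
qed

lemma dbl_integrand_nonneg:
  assumes "a \<le> y"
  shows "0 \<le> dbl_integrand y"
proof -
  have "0 < 1 / (3 * q y)" using q_pos[OF assms] by simp
  with dbl_integrand_bounds(1)[OF assms] show ?thesis by linarith
qed

lemma continuous_on_dbl_integrand: "continuous_on {a<..} dbl_integrand"
proof (rule continuous_at_imp_continuous_on, rule ballI)
  fix y assume "y \<in> {a<..}"
  have "((\<lambda>y. integral {y..} (\<lambda>\<xi>. exp (- gam q \<xi>))) has_real_derivative - exp (- gam q y)) (at y)"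
    using \<open>y \<in> {a<..}\<close>
    by (intro has_real_derivative_integral_Ici[OF continuous_on_exp_neg_gam _ exp_neg_gam_tail_bounds(1)]) auto
  then show "isCont dbl_integrand y"
    unfolding dbl_integrand_def[abs_def] using a_pos \<open>y \<in> {a<..}\<close>
    by (intro continuous_intros DERIV_isCont[OF DERIV_gam]) (auto dest: DERIV_isCont)
qed

lemma dbl_integrand_integrable:
  assumes "a < z"
  shows "dbl_integrand integrable_on {z..}"
proof (rule integrable_on_Ici_if_bounded(1)[where B = "M_fun q z"])
  show cont: "continuous_on {z..} dbl_integrand"
    by (rule continuous_on_subset[OF continuous_on_dbl_integrand]) (use assms in auto)
  show "0 \<le> dbl_integrand x" if "z \<le> x" for x using that assms by (intro dbl_integrand_nonneg) auto
  show "integral {z..T} dbl_integrand \<le> M_fun q z" if "z \<le> T" for T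
  proof -
    have int_inv: "(\<lambda>y. 1 / q y) integrable_on {z..T}"
      by (rule integrable_continuous_interval, rule continuous_on_subset[OF continuous_on_inverse_q])
         (use assms in auto)
    have "integral {z..T} dbl_integrand \<le> integral {z..T} (\<lambda>y. 1 / q y)"
    proof (rule integral_le[OF _ int_inv])
      show "dbl_integrand integrable_on {z..T}"
        by (rule integrable_continuous_interval, rule continuous_on_subset[OF cont]) auto
      show "dbl_integrand x \<le> 1 / q x" if "x \<in> {z..T}" for x
        using that assms by (intro dbl_integrand_bounds(2)) auto
    qed
    also have "\<dots> \<le> integral {z..} (\<lambda>y. 1 / q y)"
      using assms by (intro integral_subset_le[OF _ int_inv has_integral_integrable[OF M_has_integral]])
        (auto intro!: less_imp_le[OF q_pos])
    also have "\<dots> = M_fun q z"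
      using assms by (simp add: integral_unique[OF M_has_integral])
    finally show ?thesis .
  qed
qed

lemma frak_m_eq:
  assumes "a < z"
  shows "frak_m q z = 2 * integral {z..} dbl_integrand"
proof -
  have inner: "inner_int q y = ennreal (integral {y..} (\<lambda>\<xi>. exp (- gam q \<xi>)))" if "a \<le> y" for y
    unfolding inner_int_def
    using nn_integral_has_integral_lebesgue'[OF _ integrable_integral[OF exp_neg_gam_tail_bounds(1)[OF that]]]
    by simp
  have integrand: "ennreal (exp (gam q y)) * inner_int q y = ennreal (dbl_integrand y)"
    if "z \<le> y" for y
  proof -
    have "0 \<le> integral {y..} (\<lambda>\<xi>. exp (- gam q \<xi>))"
      using that assms by (intro integral_nonneg exp_neg_gam_tail_bounds(1)) auto
    then show ?thesis
      using that assms inner[of y] unfolding dbl_integrand_def by (simp add: ennreal_mult)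
  qed
  have "dbl_int q z = (\<integral>\<^sup>+y. ennreal (dbl_integrand y) * indicator {z..} y \<partial>lborel)"
    unfolding dbl_int_def by (rule nn_integral_cong) (simp add: integrand split: split_indicator)
  also have "\<dots> = ennreal (integral {z..} dbl_integrand)"
    by (rule nn_integral_has_integral_lebesgue'[OF _ integrable_integral[OF dbl_integrand_integrable[OF assms]]])
       (use assms in \<open>auto intro: dbl_integrand_nonneg\<close>)
  finally have "dbl_int q z = ennreal (integral {z..} dbl_integrand)" .
  moreover have "0 \<le> integral {z..} dbl_integrand"
    by (rule integral_nonneg[OF dbl_integrand_integrable[OF assms]])
       (use assms in \<open>auto intro: dbl_integrand_nonneg\<close>)
  ultimately show ?thesis by (simp add: frak_m_def)
qed

lemma DERIV_frak_m:
  assumes "a < z"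
  shows "(frak_m q has_real_derivative - 2 * dbl_integrand z) (at z)"
proof -
  define b where "b = (a + z) / 2"
  have "a < b" "b < z" using assms by (auto simp: b_def)
  have "((\<lambda>y. integral {y..} dbl_integrand) has_real_derivative - dbl_integrand z) (at z)"
  proof (rule has_real_derivative_integral_Ici[OF _ _ dbl_integrand_integrable[OF \<open>a < b\<close>] \<open>b < z\<close>])
    show "continuous_on {b..} dbl_integrand"
      by (rule continuous_on_subset[OF continuous_on_dbl_integrand]) (use \<open>a < b\<close> in auto)
    show "0 \<le> dbl_integrand x" if "b \<le> x" for x
      using that \<open>a < b\<close> by (intro dbl_integrand_nonneg) auto
  qed
  from DERIV_cmult[OF this, of 2]
  have "((\<lambda>y. 2 * integral {y..} dbl_integrand) has_real_derivative - 2 * dbl_integrand z) (at z)"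
    by simp
  then show ?thesis
  proof (rule has_field_derivative_transform_within_open)
    show "2 * integral {y..} dbl_integrand = frak_m q y" if "y \<in> {b<..}" for y
      using frak_m_eq[of y] that \<open>a < b\<close> by simp
  qed (use \<open>b < z\<close> in auto)
qed

lemma frak_m_deriv_bound:
  assumes "a < z"
  shows "\<bar>deriv (frak_m q) z / sqrt (frak_m q z)\<bar> \<le> 4 / (q z * sqrt (M_fun q z))"
proof -
  have "0 < q z" "0 < M_fun q z" using assms q_pos M_pos by auto
  have h: "0 \<le> dbl_integrand z" "dbl_integrand z \<le> 1 / q z"
    using assms dbl_integrand_nonneg dbl_integrand_bounds(2) by auto
  have "((\<lambda>y. 1 / 3 * (1 / q y)) has_integral 1 / 3 * M_fun q z) {z..}"
    using assms by (intro has_integral_mult_right M_has_integral) auto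
  moreover have "(dbl_integrand has_integral integral {z..} dbl_integrand) {z..}"
    by (rule integrable_integral[OF dbl_integrand_integrable[OF assms]])
  ultimately have "1 / 3 * M_fun q z \<le> integral {z..} dbl_integrand"
    by (rule has_integral_le) (use assms dbl_integrand_bounds(1) in auto)
  then have "M_fun q z / 4 \<le> frak_m q z"
    using \<open>0 < M_fun q z\<close> frak_m_eq[OF assms] by auto
  then have "sqrt (M_fun q z / 4) \<le> sqrt (frak_m q z)" "0 \<le> frak_m q z"
    using \<open>0 < M_fun q z\<close> by (auto intro: real_sqrt_le_mono)
  then have m: "sqrt (M_fun q z) / 2 \<le> sqrt (frak_m q z)" "0 \<le> frak_m q z"
    by (simp_all add: real_sqrt_divide)
  have "\<bar>deriv (frak_m q) z / sqrt (frak_m q z)\<bar> = 2 * dbl_integrand z / sqrt (frak_m q z)"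
    using h m(2) by (simp add: DERIV_imp_deriv[OF DERIV_frak_m[OF assms]] abs_divide)
  also have "\<dots> \<le> (2 / q z) / (sqrt (M_fun q z) / 2)"
    by (rule frac_le) (use h m \<open>0 < q z\<close> \<open>0 < M_fun q z\<close> in auto)
  also have "\<dots> = 4 / (q z * sqrt (M_fun q z))"
    by (simp add: field_simps)
  finally show ?thesis .
qed

lemma frak_m_deriv_over_sqrt_tendsto_0:
  assumes "filterlim (\<lambda>z. q z * sqrt (M_fun q z)) at_top at_top"
  shows "((\<lambda>z. deriv (frak_m q) z / sqrt (frak_m q z)) \<longlongrightarrow> 0) at_top"
proof (rule Lim_null_comparison)
  show "eventually (\<lambda>z. norm (deriv (frak_m q) z / sqrt (frak_m q z))
      \<le> 4 / (q z * sqrt (M_fun q z))) at_top"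
    using eventually_gt_at_top[of a] by eventually_elim (use frak_m_deriv_bound in simp)
  show "((\<lambda>z. 4 / (q z * sqrt (M_fun q z))) \<longlongrightarrow> 0) at_top"
    by (rule tendsto_divide_0[OF tendsto_const filterlim_at_top_imp_at_infinity[OF assms]])
qed

end

lemma (in integrable_reciprocal) lipschitz_reciprocal_eventually:
  assumes "((\<lambda>x. q' x / (q x)\<^sup>2) \<longlongrightarrow> 0) at_top"
  shows "\<exists>b. lipschitz_reciprocal q q' b"
proof -
  have "eventually (\<lambda>x. \<bar>q' x / (q x)\<^sup>2\<bar> < 1) at_top"
    using assms by (auto simp: tendsto_iff dist_real_def)
  then obtain N where N: "\<And>x. N \<le> x \<Longrightarrow> \<bar>q' x / (q x)\<^sup>2\<bar> < 1"
    by (auto simp: eventually_at_top_linorder)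
  have "lipschitz_reciprocal q q' (max a N)"
  proof unfold_locales
    show "\<bar>q' x / (q x)\<^sup>2\<bar> \<le> 1" if "max a N \<le> x" for x
      using N[of x] that by simp
  qed (use a_pos deriv_q q_ge_1 integrable_inverse_q in auto)
  then show ?thesis ..
qed

lemma integrable_reciprocal_eventually:
  fixes q q' :: "real \<Rightarrow> real"
  assumes "\<And>x. 0 \<le> x \<Longrightarrow> (q has_real_derivative q' x) (at x within {0..})"
    and "filterlim q at_top at_top"
    and "eventually (\<lambda>z. set_integrable lborel {z..} (\<lambda>y. 1 / q y)) at_top"
  shows "\<exists>a. integrable_reciprocal q q' a"
proof -
  have "eventually (\<lambda>x. 1 \<le> q x) at_top" using assms(2) by (simp add: filterlim_at_top)
  from eventually_conj[OF this assms(3)] obtain N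
    where "\<And>x. N \<le> x \<Longrightarrow> 1 \<le> q x \<and> set_integrable lborel {x..} (\<lambda>y. 1 / q y)"
    by (auto simp: eventually_at_top_linorder)
  then have "integrable_reciprocal q q' (max N 1)"
    using assms(1) by unfold_locales auto
  then show ?thesis ..
qed

theorem lemma6p1:
  fixes q q' :: "real \<Rightarrow> real"
  assumes deriv_q: "\<And>x. x \<ge> 0 \<Longrightarrow> (q has_real_derivative q' x) (at x within {0..})"
    and cont_q': "continuous_on {0..} q'"
    and H1: "H1 q"
    and q_inf: "filterlim q at_top at_top"
    and M_finite: "eventually (\<lambda>z. set_integrable lborel {z..} (\<lambda>y. 1 / q y)) at_top"
    and cond: "((\<lambda>z. q' z / q z * sqrt (M_fun q z)) \<longlongrightarrow> 0) at_top"
  shows "filterlim (\<lambda>z. q z * sqrt (M_fun q z)) at_top at_top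
       \<and> (filterlim q at_top at_top \<and> ((\<lambda>x. q' x / (q x)\<^sup>2) \<longlongrightarrow> 0) at_top)
       \<and> ((\<lambda>z. deriv (frak_m q) z / sqrt (frak_m q z)) \<longlongrightarrow> 0) at_top"
proof -
  obtain a where "integrable_reciprocal q q' a"
    using integrable_reciprocal_eventually[OF deriv_q q_inf M_finite] by blast
  then interpret integrable_reciprocal q q' a .
  have growth: "filterlim (\<lambda>z. q z * sqrt (M_fun q z)) at_top at_top"
    by (rule q_sqrt_M_at_top[OF cond])
  have ratio: "((\<lambda>x. q' x / (q x)\<^sup>2) \<longlongrightarrow> 0) at_top"
    by (rule q'_over_q2_tendsto_0[OF cond])
  obtain b where "lipschitz_reciprocal q q' b"
    using lipschitz_reciprocal_eventually[OF ratio] by blast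
  then interpret lip: lipschitz_reciprocal q q' b .
  show ?thesis
    using growth q_inf ratio lip.frak_m_deriv_over_sqrt_tendsto_0[OF growth] by blast
qed

end
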